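(* Let $\mathcal{L}:\mathbb{R}^d\to\mathbb{R}$ be differentiable, $L>0$, $\eta>0$, and $S\ge1$ an integer. Let random sequences $(\theta_t)$, $(\widehat g_t)$ in $\mathbb{R}^d$ be defined for all $t\ge -S$ with $\theta_{t+1}=\theta_t+\eta\,\widehat g_t$ for all $t\ge -S$, and for $t\ge0$ write $\widehat g_t=\nabla\mathcal{L}(\theta_t)+b_t+\xi_t$, where $(\mathcal{F}_t)_{t\ge0}$ is a filtration with $\theta_t,b_t$ $\mathcal{F}_t$-measurable. Assume for all $t\ge0$: (A.1) $\|\nabla\mathcal{L}(\theta)-\nabla\mathcal{L}(\theta')\|\le L\|\theta-\theta'\|$ for all $\theta,\theta'$; (A.2) $\mathbb{E}[\xi_t\mid\mathcal{F}_t]=0$ and $\mathbb{E}[\|\xi_t\|^2\mid\mathcal{F}_t]\le\sigma^2$ for some $\sigma^2>0$; (A.3) $\mathcal{L}^\star:=\sup_\theta\mathcal{L}(\theta)<\infty$; (A.4) $\eta\le\frac{1}{4L}$; (A.5) there is an integer $\tau_t$ with $1\le\tau_t\le S$ (the staleness), so that $\theta_t-\theta_{t-\tau_t}=\sum_{k=1}^{\tau_t}\eta\,\widehat g_{t-k}$; (A.6) there are (possibly random) matrices $B_t\in\mathbb{R}^{d\times d}$ and remainders $r_t$ with $b_t=B_t(\theta_t-\theta_{t-\tau_t})+r_t$ and $\mathbb{E}\|r_t\|\le\varepsilon_t$; (A.7) there is $\lambda_t\ge0$ with $\mathbb{E}[\widehat g_{t-1}^\top B_t\widehat g_{t-1}]\ge\lambda_t\,\mathbb{E}\|\widehat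 g_{t-1}\|^2$; (A.8) there are $\rho_t\in[0,1]$ and $\delta_t\ge0$ with $\mathbb{E}[\langle\nabla\mathcal{L}(\theta_t),B_t\widehat g_{t-1}\rangle]\ge\rho_t\,\mathbb{E}[\widehat g_{t-1}^\top B_t\widehat g_{t-1}]-\delta_t$. Then for every $T\ge1$, \[ \min_{0\le t\le T-1}\mathbb{E}\|\nabla\mathcal{L}(\theta_t)\|^2\le\frac{2(\mathcal{L}^\star-\mathcal{L}(\theta_0))}{\eta T}+2L\eta\sigma^2+\frac{4L\eta}{T}\sum_{t=0}^{T-1}\mathbb{E}\|b_t\|^2-\frac{2}{T}\sum_{t=0}^{T-1}\eta\,\rho_t\lambda_t\,\mathbb{E}\|\widehat g_{t-1}\|^2+\mathrm{Err}(T), \] where \[ \mathrm{Err}(T)=\frac{2}{T}\sum_{t=0}^{T-1}\Big(\eta\sum_{k=2}^{\tau_t}\mathbb{E}\big|\langle\nabla\mathcal{L}(\theta_t),B_t\widehat g_{t-k}\rangle\big|+\mathbb{E}\big[\|\nabla\mathcal{L}(\theta_t)\|\,\|r_t\|\big]+\eta\,\delta_t\Big). \]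
   Context: This models asynchronous GRPO as stochastic gradient ascent on a surrogate objective $\mathcal{L}$, with gradients computed from rollouts generated by a stale parameter $\theta_{t-\tau_t}$; $b_t$ is the staleness-induced bias, $\xi_t$ zero-mean noise. Norms are Euclidean; all expectations are assumed finite. *)

theory Defs
  imports "HOL-Probability.Probability"
begin

end

theory Submission
  imports Defs
begin

(* With g = \<nabla>L(\<theta>) + b + \<xi>, smoothness gives
   L(\<theta> + \<eta> g) \<ge> L(\<theta>) + \<eta> <\<nabla>L(\<theta>), g> - L \<eta>^2 |g|^2 and |\<nabla>L + b|^2 \<le> 2|\<nabla>L|^2 + 2|b|^2.
   Taking expectations, the terms linear in \<xi> vanish because \<xi>_t is conditionally centred
   given F_t while \<nabla>L(\<theta>_t) and b_t are F_t-measurable; with \<eta> \<le> 1/(4L) this leaves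
   (\<eta>/2) E|\<nabla>L(\<theta>_t)|^2 \<le> E L(\<theta>_(t+1)) - E L(\<theta>_t) - \<eta> E<\<nabla>L(\<theta>_t), b_t>
                           + 2L\<eta>^2 E|b_t|^2 + L\<eta>^2\<sigma>^2.
   By (A.5) and (A.6), b_t is B_t applied to the last \<tau>_t steps plus r_t; the most recent step
   gives the negative drift through (A.7) and (A.8), the older ones and r_t are the error
   terms. Telescoping over t < T, bounding E L(\<theta>_T) by sup L and the minimum by the
   average yields the claim. *)

(* The sharp constant is Lip/2; the weaker form suffices for the theorem. *)
lemma lipschitz_gradient_ascent_bound:
  fixes Lf :: "'a::real_inner \<Rightarrow> real" and gradL :: "'a \<Rightarrow> 'a"
  assumes grad: "\<And>x. (Lf has_derivative (\<lambda>h. gradL x \<bullet> h)) (at x)"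
    and lip: "\<And>x y. norm (gradL x - gradL y) \<le> Lip * norm (x - y)"
    and "0 \<le> Lip"
  shows "Lf x + gradL x \<bullet> (y - x) - Lip * (norm (y - x))\<^sup>2 \<le> Lf y"
proof -
  define v where "v = y - x"
  define \<phi> where "\<phi> s = Lf (x + s *\<^sub>R v)" for s :: real
  have deriv: "(\<phi> has_real_derivative gradL (x + s *\<^sub>R v) \<bullet> v) (at s)" for s
  proof -
    have "((\<lambda>s. x + s *\<^sub>R v) has_derivative (\<lambda>h. h *\<^sub>R v)) (at s)"
      by (auto intro!: derivative_eq_intros)
    from has_derivative_compose[OF this grad]
    show ?thesis
      unfolding \<phi>_def has_field_derivative_def by (simp add: o_def mult.commute[of _ "gradL _ \<bullet> v"])
  qed
  obtain c where c: "0 < c" "c < 1" "\<phi> 1 - \<phi> 0 = gradL (x + c *\<^sub>R v) \<bullet> v"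
    using MVT2[of 0 1 \<phi> "\<lambda>s. gradL (x + s *\<^sub>R v) \<bullet> v"] deriv by auto
  have "\<bar>gradL (x + c *\<^sub>R v) \<bullet> v - gradL x \<bullet> v\<bar> \<le> norm (gradL (x + c *\<^sub>R v) - gradL x) * norm v"
    by (metis Cauchy_Schwarz_ineq2 inner_diff_left)
  also have "\<dots> \<le> Lip * (c * norm v) * norm v"
    using lip[of "x + c *\<^sub>R v" x] c by (intro mult_right_mono) auto
  also have "\<dots> = c * (Lip * (norm v)\<^sup>2)"
    by (simp add: power2_eq_square)
  also have "\<dots> \<le> Lip * (norm v)\<^sup>2"
    using c \<open>0 \<le> Lip\<close> by (intro mult_left_le_one_le) auto
  finally show ?thesis
    using c(3) unfolding \<phi>_def v_def by (simp add: abs_le_iff)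
qed

lemma ascent_step_pointwise:
  fixes Lf :: "'a::real_inner \<Rightarrow> real" and gradL :: "'a \<Rightarrow> 'a"
  assumes grad: "\<And>x. (Lf has_derivative (\<lambda>h. gradL x \<bullet> h)) (at x)"
    and lip: "\<And>x y. norm (gradL x - gradL y) \<le> Lip * norm (x - y)"
    and "0 \<le> Lip"
  shows "Lf x + (\<eta> - 2 * Lip * \<eta>\<^sup>2) * (norm (gradL x))\<^sup>2 + \<eta> * (gradL x \<bullet> b)
      + (\<eta> - 2 * Lip * \<eta>\<^sup>2) * (gradL x \<bullet> \<xi>) - 2 * Lip * \<eta>\<^sup>2 * (b \<bullet> \<xi>)
      - 2 * Lip * \<eta>\<^sup>2 * (norm b)\<^sup>2 - Lip * \<eta>\<^sup>2 * (norm \<xi>)\<^sup>2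
    \<le> Lf (x + \<eta> *\<^sub>R (gradL x + b + \<xi>))"
proof -
  define G where "G = gradL x"
  define c where "c = Lip * \<eta>\<^sup>2"
  have "(norm (G + b))\<^sup>2 \<le> (norm (G + b))\<^sup>2 + (norm (G - b))\<^sup>2"
    by simp
  also have "\<dots> = 2 * (norm G)\<^sup>2 + 2 * (norm b)\<^sup>2"
    by (simp add: power2_norm_eq_inner algebra_simps inner_commute)
  finally have "c * (norm (G + b))\<^sup>2 \<le> c * (2 * (norm G)\<^sup>2 + 2 * (norm b)\<^sup>2)"
    using \<open>0 \<le> Lip\<close> by (intro mult_left_mono) (auto simp: c_def)
  moreover have "(norm (G + b + \<xi>))\<^sup>2 = (norm (G + b))\<^sup>2 + 2 * (G \<bullet> \<xi>) + 2 * (b \<bullet> \<xi>) + (norm \<xi>)\<^sup>2"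
    by (simp add: power2_norm_eq_inner algebra_simps inner_commute)
  moreover have "G \<bullet> (\<eta> *\<^sub>R (G + b + \<xi>)) = \<eta> * (norm G)\<^sup>2 + \<eta> * (G \<bullet> b) + \<eta> * (G \<bullet> \<xi>)"
    by (simp add: inner_add_right power2_norm_eq_inner algebra_simps)
  moreover have "Lip * (norm (\<eta> *\<^sub>R (G + b + \<xi>)))\<^sup>2 = c * (norm (G + b + \<xi>))\<^sup>2"
    by (simp add: c_def power_mult_distrib)
  moreover have "Lf x + G \<bullet> (\<eta> *\<^sub>R (G + b + \<xi>)) - Lip * (norm (\<eta> *\<^sub>R (G + b + \<xi>)))\<^sup>2
      \<le> Lf (x + \<eta> *\<^sub>R (G + b + \<xi>))"
    using lipschitz_gradient_ascent_bound[OF grad lip \<open>0 \<le> Lip\<close>, of x "x + \<eta> *\<^sub>R (G + b + \<xi>)"]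
    by (simp add: G_def)
  ultimately have "Lf x + (\<eta> - 2 * c) * (norm G)\<^sup>2 + \<eta> * (G \<bullet> b) + (\<eta> - 2 * c) * (G \<bullet> \<xi>)
      - 2 * c * (b \<bullet> \<xi>) - 2 * c * (norm b)\<^sup>2 - c * (norm \<xi>)\<^sup>2 \<le> Lf (x + \<eta> *\<^sub>R (G + b + \<xi>))"
    by (simp only: left_diff_distrib distrib_left)
  then show ?thesis
    by (simp add: G_def c_def mult.assoc)
qed

lemma integrable_of_norm_le_mult_square_integrable:
  fixes f :: "'m \<Rightarrow> 'b::{banach, second_countable_topology}"
  assumes "f \<in> borel_measurable M" "\<And>\<omega>. norm (f \<omega>) \<le> p \<omega> * q \<omega>"
    and "integrable M (\<lambda>\<omega>. (p \<omega>)\<^sup>2)" "integrable M (\<lambda>\<omega>. (q \<omega>)\<^sup>2)"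
  shows "integrable M f"
proof (rule Bochner_Integration.integrable_bound)
  show "integrable M (\<lambda>\<omega>. ((p \<omega>)\<^sup>2 + (q \<omega>)\<^sup>2) / 2)"
    using assms by auto
  show "AE \<omega> in M. norm (f \<omega>) \<le> norm (((p \<omega>)\<^sup>2 + (q \<omega>)\<^sup>2) / 2)"
  proof (intro AE_I2)
    fix \<omega>
    have "p \<omega> * q \<omega> \<le> ((p \<omega>)\<^sup>2 + (q \<omega>)\<^sup>2) / 2"
      using sum_squares_bound[of "p \<omega>" "q \<omega>"] by simp
    then show "norm (f \<omega>) \<le> norm (((p \<omega>)\<^sup>2 + (q \<omega>)\<^sup>2) / 2)"
      using assms(2)[of \<omega>] by simp
  qed
qed (use assms in simp)

lemma integrable_inner_of_square_integrable:
  fixes u v :: "'m \<Rightarrow> 'a::{real_inner, second_countable_topology}"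
  assumes [measurable]: "u \<in> borel_measurable M" "v \<in> borel_measurable M"
    and "integrable M (\<lambda>\<omega>. (norm (u \<omega>))\<^sup>2)" "integrable M (\<lambda>\<omega>. (norm (v \<omega>))\<^sup>2)"
  shows "integrable M (\<lambda>\<omega>. u \<omega> \<bullet> v \<omega>)"
  by (rule integrable_of_norm_le_mult_square_integrable[where p = "\<lambda>\<omega>. norm (u \<omega>)"
        and q = "\<lambda>\<omega>. norm (v \<omega>)"])
     (use assms Cauchy_Schwarz_ineq2 in auto)

lemma borel_measurable_lipschitz:
  fixes f :: "'a::real_normed_vector \<Rightarrow> 'b::real_normed_vector"
  assumes "\<And>x y. norm (f x - f y) \<le> L * norm (x - y)" "0 \<le> L"
  shows "f \<in> borel_measurable borel"
proof (rule borel_measurable_continuous_onI)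
  have "L-lipschitz_on UNIV f"
    by (rule lipschitz_onI) (use assms in \<open>auto simp: dist_norm\<close>)
  then show "continuous_on UNIV f"
    by (rule lipschitz_on_continuous_on)
qed

lemma borel_measurable_vec_nth [measurable (raw)]:
  fixes f :: "'a \<Rightarrow> real^'n"
  shows "f \<in> borel_measurable M \<Longrightarrow> (\<lambda>\<omega>. f \<omega> $ i) \<in> borel_measurable M"
  by (rule measurable_compose[OF _ borel_measurable_nth])

lemma (in sigma_finite_subalgebra) integral_inner_eq_0_of_real_cond_exp_eq_0:
  fixes h \<xi> :: "'a \<Rightarrow> real^'d"
  assumes hF: "h \<in> borel_measurable F" and [measurable]: "\<xi> \<in> borel_measurable M"
    and cond_exp: "\<And>i. AE \<omega> in M. real_cond_exp M F (\<lambda>\<omega>. \<xi> \<omega> $ i) \<omega> = 0"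
    and "integrable M (\<lambda>\<omega>. (norm (h \<omega>))\<^sup>2)" "integrable M (\<lambda>\<omega>. (norm (\<xi> \<omega>))\<^sup>2)"
  shows "(\<integral>\<omega>. h \<omega> \<bullet> \<xi> \<omega> \<partial>M) = 0"
proof -
  have hiF: "(\<lambda>\<omega>. h \<omega> $ i) \<in> borel_measurable F" for i
    using hF by measurable
  have [measurable]: "h \<in> borel_measurable M"
    using measurable_from_subalg[OF subalg hF] .
  have int: "integrable M (\<lambda>\<omega>. h \<omega> $ i * \<xi> \<omega> $ i)" for i
  proof (rule integrable_of_norm_le_mult_square_integrable[where p = "\<lambda>\<omega>. norm (h \<omega>)"
        and q = "\<lambda>\<omega>. norm (\<xi> \<omega>)"])
    show "(\<lambda>\<omega>. h \<omega> $ i * \<xi> \<omega> $ i) \<in> borel_measurable M"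
      by measurable
  qed (use assms in \<open>auto simp: abs_mult intro!: mult_mono component_le_norm_cart\<close>)
  have "(\<integral>\<omega>. h \<omega> $ i * \<xi> \<omega> $ i \<partial>M) = (\<integral>\<omega>. h \<omega> $ i * real_cond_exp M F (\<lambda>\<omega>. \<xi> \<omega> $ i) \<omega> \<partial>M)"
    for i using real_cond_exp_intg(2)[OF int hiF] by simp
  also have "\<dots> i = 0" for i
    using cond_exp[of i] by (auto intro!: integral_eq_zero_AE elim!: AE_mp)
  finally show ?thesis
    using int by (simp add: inner_vec_def Bochner_Integration.integral_sum)
qed

lemma (in finite_measure_subalgebra) integral_le_of_real_cond_exp_le:
  assumes "integrable M f" "AE \<omega> in M. real_cond_exp M F f \<omega> \<le> c"
  shows "(\<integral>\<omega>. f \<omega> \<partial>M) \<le> c * measure M (space M)"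
proof -
  have "(\<integral>\<omega>. f \<omega> \<partial>M) = (\<integral>\<omega>. real_cond_exp M F f \<omega> \<partial>M)"
    using real_cond_exp_int(2)[OF assms(1)] by simp
  also have "\<dots> \<le> (\<integral>\<omega>. c \<partial>M)"
    using assms by (intro integral_mono_AE real_cond_exp_int(1)) auto
  finally show ?thesis
    by (simp add: mult.commute)
qed

lemma expected_ascent_step:
  fixes Lf :: "real^'d \<Rightarrow> real" and gradL :: "real^'d \<Rightarrow> real^'d"
    and x b \<xi> :: "'m \<Rightarrow> real^'d"
  assumes "prob_space M" "subalgebra M F"
    and grad: "\<And>x. (Lf has_derivative (\<lambda>h. gradL x \<bullet> h)) (at x)"
    and lip: "\<And>x y. norm (gradL x - gradL y) \<le> Lip * norm (x - y)"
    and Lip_pos: "0 < Lip" and \<eta>_pos: "0 < \<eta>" and \<eta>_le: "\<eta> \<le> 1 / (4 * Lip)"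
    and xF: "x \<in> borel_measurable F" and bF: "b \<in> borel_measurable F"
    and \<xi>M: "\<xi> \<in> borel_measurable M"
    and mean: "\<And>i. AE \<omega> in M. real_cond_exp M F (\<lambda>\<omega>. \<xi> \<omega> $ i) \<omega> = 0"
    and var: "AE \<omega> in M. real_cond_exp M F (\<lambda>\<omega>. (norm (\<xi> \<omega>))\<^sup>2) \<omega> \<le> \<sigma>2"
    and int_L: "integrable M (\<lambda>\<omega>. Lf (x \<omega>))"
    and int_L': "integrable M (\<lambda>\<omega>. Lf (x \<omega> + \<eta> *\<^sub>R (gradL (x \<omega>) + b \<omega> + \<xi> \<omega>)))"
    and int_grad: "integrable M (\<lambda>\<omega>. (norm (gradL (x \<omega>)))\<^sup>2)"
    and int_b: "integrable M (\<lambda>\<omega>. (norm (b \<omega>))\<^sup>2)"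
    and int_\<xi>: "integrable M (\<lambda>\<omega>. (norm (\<xi> \<omega>))\<^sup>2)"
  shows "\<eta> / 2 * (\<integral>\<omega>. (norm (gradL (x \<omega>)))\<^sup>2 \<partial>M)
    \<le> (\<integral>\<omega>. Lf (x \<omega> + \<eta> *\<^sub>R (gradL (x \<omega>) + b \<omega> + \<xi> \<omega>)) \<partial>M) - (\<integral>\<omega>. Lf (x \<omega>) \<partial>M)
      - \<eta> * (\<integral>\<omega>. gradL (x \<omega>) \<bullet> b \<omega> \<partial>M)
      + 2 * Lip * \<eta>\<^sup>2 * (\<integral>\<omega>. (norm (b \<omega>))\<^sup>2 \<partial>M) + Lip * \<eta>\<^sup>2 * \<sigma>2"
proof -
  interpret prob_space M by fact
  interpret finite_measure_subalgebra M F by unfold_locales fact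
  have [measurable]: "gradL \<in> borel_measurable borel"
    using borel_measurable_lipschitz[OF lip] Lip_pos by simp
  have GF: "(\<lambda>\<omega>. gradL (x \<omega>)) \<in> borel_measurable F"
    using xF by measurable
  have GM: "(\<lambda>\<omega>. gradL (x \<omega>)) \<in> borel_measurable M" and bM: "b \<in> borel_measurable M"
    using measurable_from_subalg[OF subalg] GF bF by auto
  have "\<eta> / 2 \<le> \<eta> - 2 * Lip * \<eta>\<^sup>2"
  proof -
    have "2 * Lip * \<eta>\<^sup>2 = \<eta> * (2 * (Lip * \<eta>))"
      by (simp add: power2_eq_square)
    also have "\<dots> \<le> \<eta> * (1 / 2)"
      using Lip_pos \<eta>_pos \<eta>_le by (intro mult_left_mono) (auto simp: field_simps)
    finally show ?thesis
      by simp
  qed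
  then have descent_coeff: "\<eta> / 2 * (\<integral>\<omega>. (norm (gradL (x \<omega>)))\<^sup>2 \<partial>M)
      \<le> (\<eta> - 2 * Lip * \<eta>\<^sup>2) * (\<integral>\<omega>. (norm (gradL (x \<omega>)))\<^sup>2 \<partial>M)"
    by (intro mult_right_mono) auto
  have noise: "Lip * \<eta>\<^sup>2 * (\<integral>\<omega>. (norm (\<xi> \<omega>))\<^sup>2 \<partial>M) \<le> Lip * \<eta>\<^sup>2 * \<sigma>2"
    using integral_le_of_real_cond_exp_le[OF int_\<xi> var] Lip_pos
    by (intro mult_left_mono) (auto simp: prob_space)
  have int_Gb: "integrable M (\<lambda>\<omega>. gradL (x \<omega>) \<bullet> b \<omega>)"
    and int_G\<xi>: "integrable M (\<lambda>\<omega>. gradL (x \<omega>) \<bullet> \<xi> \<omega>)"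
    and int_b\<xi>: "integrable M (\<lambda>\<omega>. b \<omega> \<bullet> \<xi> \<omega>)"
    using GM bM \<xi>M int_grad int_b int_\<xi> by (auto intro!: integrable_inner_of_square_integrable)
  have G\<xi>: "(\<integral>\<omega>. gradL (x \<omega>) \<bullet> \<xi> \<omega> \<partial>M) = 0"
    by (rule integral_inner_eq_0_of_real_cond_exp_eq_0[OF GF \<xi>M mean int_grad int_\<xi>])
  have b\<xi>: "(\<integral>\<omega>. b \<omega> \<bullet> \<xi> \<omega> \<partial>M) = 0"
    by (rule integral_inner_eq_0_of_real_cond_exp_eq_0[OF bF \<xi>M mean int_b int_\<xi>])
  note integrable = int_L int_grad int_b int_\<xi> int_Gb int_G\<xi> int_b\<xi>
  have "(\<integral>\<omega>. Lf (x \<omega>) + (\<eta> - 2 * Lip * \<eta>\<^sup>2) * (norm (gradL (x \<omega>)))\<^sup>2 + \<eta> * (gradL (x \<omega>) \<bullet> b \<omega>)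
      + (\<eta> - 2 * Lip * \<eta>\<^sup>2) * (gradL (x \<omega>) \<bullet> \<xi> \<omega>) - 2 * Lip * \<eta>\<^sup>2 * (b \<omega> \<bullet> \<xi> \<omega>)
      - 2 * Lip * \<eta>\<^sup>2 * (norm (b \<omega>))\<^sup>2 - Lip * \<eta>\<^sup>2 * (norm (\<xi> \<omega>))\<^sup>2 \<partial>M)
    \<le> (\<integral>\<omega>. Lf (x \<omega> + \<eta> *\<^sub>R (gradL (x \<omega>) + b \<omega> + \<xi> \<omega>)) \<partial>M)"
    (is "integral\<^sup>L M ?lower \<le> _")
    using ascent_step_pointwise[OF grad lip] Lip_pos integrable
    by (intro integral_mono int_L') auto
  also have "integral\<^sup>L M ?lower
    = (\<integral>\<omega>. Lf (x \<omega>) \<partial>M) + (\<eta> - 2 * Lip * \<eta>\<^sup>2) * (\<integral>\<omega>. (norm (gradL (x \<omega>)))\<^sup>2 \<partial>M)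
      + \<eta> * (\<integral>\<omega>. gradL (x \<omega>) \<bullet> b \<omega> \<partial>M)
      - 2 * Lip * \<eta>\<^sup>2 * (\<integral>\<omega>. (norm (b \<omega>))\<^sup>2 \<partial>M) - Lip * \<eta>\<^sup>2 * (\<integral>\<omega>. (norm (\<xi> \<omega>))\<^sup>2 \<partial>M)"
    using G\<xi> b\<xi> integrable by simp
  finally show ?thesis
    using descent_coeff noise by linarith
qed

lemma integral_inner_bias_lower_bound:
  fixes G b r :: "'m \<Rightarrow> real^'d" and B :: "'m \<Rightarrow> real^'d^'d" and h :: "nat \<Rightarrow> 'm \<Rightarrow> real^'d"
  assumes b_eq: "\<And>\<omega>. b \<omega> = B \<omega> *v (\<Sum>k=1..n. \<eta> *\<^sub>R h k \<omega>) + r \<omega>"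
    and "1 \<le> n" "0 \<le> \<eta>" "0 \<le> \<rho>"
    and int_Gb: "integrable M (\<lambda>\<omega>. G \<omega> \<bullet> b \<omega>)"
    and int_Gr: "integrable M (\<lambda>\<omega>. norm (G \<omega>) * norm (r \<omega>))"
    and int_cross: "\<And>k. 1 \<le> k \<Longrightarrow> k \<le> n \<Longrightarrow> integrable M (\<lambda>\<omega>. G \<omega> \<bullet> (B \<omega> *v h k \<omega>))"
    and curvature: "(\<integral>\<omega>. h 1 \<omega> \<bullet> (B \<omega> *v h 1 \<omega>) \<partial>M) \<ge> lam * (\<integral>\<omega>. (norm (h 1 \<omega>))\<^sup>2 \<partial>M)"
    and alignment: "(\<integral>\<omega>. G \<omega> \<bullet> (B \<omega> *v h 1 \<omega>) \<partial>M)
      \<ge> \<rho> * (\<integral>\<omega>. h 1 \<omega> \<bullet> (B \<omega> *v h 1 \<omega>) \<partial>M) - \<delta>"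
  shows "\<eta> * \<rho> * lam * (\<integral>\<omega>. (norm (h 1 \<omega>))\<^sup>2 \<partial>M)
      - \<eta> * (\<Sum>k=2..n. \<integral>\<omega>. \<bar>G \<omega> \<bullet> (B \<omega> *v h k \<omega>)\<bar> \<partial>M)
      - (\<integral>\<omega>. norm (G \<omega>) * norm (r \<omega>) \<partial>M) - \<eta> * \<delta>
    \<le> (\<integral>\<omega>. G \<omega> \<bullet> b \<omega> \<partial>M)"
proof -
  define c where "c k = (\<integral>\<omega>. G \<omega> \<bullet> (B \<omega> *v h k \<omega>) \<partial>M)" for k
  have Gb_eq: "G \<omega> \<bullet> b \<omega> = \<eta> * (\<Sum>k=1..n. G \<omega> \<bullet> (B \<omega> *v h k \<omega>)) + G \<omega> \<bullet> r \<omega>" for \<omega>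
    unfolding b_eq matrix_vector_right_distrib
    by (simp add: linear_sum[OF matrix_vector_mul_linear] matrix_vector_mult_scaleR
        inner_sum_right sum_distrib_left o_def inner_add_right)
  have int_sum: "integrable M (\<lambda>\<omega>. \<Sum>k=1..n. G \<omega> \<bullet> (B \<omega> *v h k \<omega>))"
    using int_cross by auto
  have int_Gr': "integrable M (\<lambda>\<omega>. G \<omega> \<bullet> r \<omega>)"
  proof -
    have "(\<lambda>\<omega>. G \<omega> \<bullet> r \<omega>) = (\<lambda>\<omega>. G \<omega> \<bullet> b \<omega> - \<eta> * (\<Sum>k=1..n. G \<omega> \<bullet> (B \<omega> *v h k \<omega>)))"
      using Gb_eq by (simp add: fun_eq_iff)
    then show ?thesis
      using int_Gb int_sum by simp
  qed
  have "(\<integral>\<omega>. G \<omega> \<bullet> b \<omega> \<partial>M) = \<eta> * (\<Sum>k=1..n. c k) + (\<integral>\<omega>. G \<omega> \<bullet> r \<omega> \<partial>M)"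
    unfolding Gb_eq c_def using int_sum int_Gr' int_cross
    by (simp add: Bochner_Integration.integral_sum)
  also have "(\<Sum>k=1..n. c k) = c 1 + (\<Sum>k=2..n. c k)"
    using \<open>1 \<le> n\<close> by (simp add: sum.atLeast_Suc_atMost numeral_2_eq_2)
  finally have Gb_split: "(\<integral>\<omega>. G \<omega> \<bullet> b \<omega> \<partial>M)
      = \<eta> * c 1 + \<eta> * (\<Sum>k=2..n. c k) + (\<integral>\<omega>. G \<omega> \<bullet> r \<omega> \<partial>M)"
    by (simp add: distrib_left)
  have "\<rho> * lam * (\<integral>\<omega>. (norm (h 1 \<omega>))\<^sup>2 \<partial>M) - \<delta> \<le> c 1"
    using alignment mult_left_mono[OF curvature \<open>0 \<le> \<rho>\<close>] unfolding c_def by (simp add: mult.assoc)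
  then have first: "\<eta> * \<rho> * lam * (\<integral>\<omega>. (norm (h 1 \<omega>))\<^sup>2 \<partial>M) - \<eta> * \<delta> \<le> \<eta> * c 1"
    using mult_left_mono \<open>0 \<le> \<eta>\<close> by (fastforce simp: right_diff_distrib mult.assoc)
  have "- (\<Sum>k=2..n. \<integral>\<omega>. \<bar>G \<omega> \<bullet> (B \<omega> *v h k \<omega>)\<bar> \<partial>M) \<le> (\<Sum>k=2..n. c k)"
    unfolding c_def sum_negf[symmetric]
  proof (intro sum_mono)
    fix k
    show "- (\<integral>\<omega>. \<bar>G \<omega> \<bullet> (B \<omega> *v h k \<omega>)\<bar> \<partial>M) \<le> (\<integral>\<omega>. G \<omega> \<bullet> (B \<omega> *v h k \<omega>) \<partial>M)"
      using integral_abs_bound[of M "\<lambda>\<omega>. G \<omega> \<bullet> (B \<omega> *v h k \<omega>)"] by linarith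
  qed
  then have rest: "- (\<eta> * (\<Sum>k=2..n. \<integral>\<omega>. \<bar>G \<omega> \<bullet> (B \<omega> *v h k \<omega>)\<bar> \<partial>M)) \<le> \<eta> * (\<Sum>k=2..n. c k)"
    using mult_left_mono \<open>0 \<le> \<eta>\<close> by fastforce
  have remainder: "- (\<integral>\<omega>. norm (G \<omega>) * norm (r \<omega>) \<partial>M) \<le> (\<integral>\<omega>. G \<omega> \<bullet> r \<omega> \<partial>M)"
  proof -
    have "(\<integral>\<omega>. - (norm (G \<omega>) * norm (r \<omega>)) \<partial>M) \<le> (\<integral>\<omega>. G \<omega> \<bullet> r \<omega> \<partial>M)"
      using int_Gr int_Gr' Cauchy_Schwarz_ineq2 by (intro integral_mono) (auto simp: abs_le_iff minus_le_iff)
    then show ?thesis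
      by simp
  qed
  show ?thesis
    unfolding Gb_split using first rest remainder by linarith
qed

lemma (in prob_space) integral_comp_le_SUP:
  fixes f :: "'b \<Rightarrow> real"
  assumes "integrable M (\<lambda>\<omega>. f (X \<omega>))" "bdd_above (range f)"
  shows "(\<integral>\<omega>. f (X \<omega>) \<partial>M) \<le> (SUP x. f x)"
proof -
  have "(\<integral>\<omega>. f (X \<omega>) \<partial>M) \<le> (\<integral>\<omega>. (SUP x. f x) \<partial>M)"
    using assms by (intro integral_mono) (auto intro: cSUP_upper)
  then show ?thesis
    by (simp add: prob_space)
qed

lemma Min_le_of_telescoping_ascent:
  fixes a E c :: "nat \<Rightarrow> real"
  assumes "0 < T" "0 < \<eta>"
    and step: "\<And>t. t < T \<Longrightarrow> \<eta> / 2 * a t \<le> E (Suc t) - E t + c t"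
    and "E T \<le> U"
  shows "Min (a ` {0..<T}) \<le> 2 * (U - E 0) / (\<eta> * T) + 2 / (\<eta> * T) * (\<Sum>t<T. c t)"
proof -
  have "\<eta> / 2 * (T * Min (a ` {0..<T})) = (\<Sum>t<T. \<eta> / 2 * Min (a ` {0..<T}))"
    by simp
  also have "\<dots> \<le> (\<Sum>t<T. E (Suc t) - E t + c t)"
    using \<open>0 < \<eta>\<close> by (intro sum_mono order_trans[OF _ step] mult_left_mono) auto
  also have "\<dots> = E T - E 0 + (\<Sum>t<T. c t)"
    by (simp add: sum.distrib sum_lessThan_telescope)
  finally have "\<eta> / 2 * (T * Min (a ` {0..<T})) \<le> U - E 0 + (\<Sum>t<T. c t)"
    using \<open>E T \<le> U\<close> by linarith
  then show ?thesis
    using assms(1,2) by (simp add: field_simps)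
qed

lemma Min_le_of_biased_ascent_steps:
  fixes a E Y Z \<beta> :: "nat \<Rightarrow> real"
  assumes "0 < T" "0 < \<eta>"
    and "\<And>t. t < T \<Longrightarrow> \<eta> / 2 * a t
      \<le> E (Suc t) - E t + (\<eta> * (Y t - Z t) + 2 * Lip * \<eta>\<^sup>2 * \<beta> t + Lip * \<eta>\<^sup>2 * \<sigma>2)"
    and "E T \<le> U"
  shows "Min (a ` {0..<T}) \<le> 2 * (U - E 0) / (\<eta> * T) + 2 * Lip * \<eta> * \<sigma>2
      + 4 * Lip * \<eta> / T * (\<Sum>t<T. \<beta> t) - 2 / T * (\<Sum>t<T. Z t) + 2 / T * (\<Sum>t<T. Y t)"
proof -
  have "Min (a ` {0..<T}) \<le> 2 * (U - E 0) / (\<eta> * T)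
      + 2 / (\<eta> * T) * (\<Sum>t<T. \<eta> * (Y t - Z t) + 2 * Lip * \<eta>\<^sup>2 * \<beta> t + Lip * \<eta>\<^sup>2 * \<sigma>2)"
    by (rule Min_le_of_telescoping_ascent[OF assms])
  also have "(\<Sum>t<T. \<eta> * (Y t - Z t) + 2 * Lip * \<eta>\<^sup>2 * \<beta> t + Lip * \<eta>\<^sup>2 * \<sigma>2)
      = \<eta> * (\<Sum>t<T. Y t) - \<eta> * (\<Sum>t<T. Z t) + 2 * Lip * \<eta>\<^sup>2 * (\<Sum>t<T. \<beta> t) + T * (Lip * \<eta>\<^sup>2 * \<sigma>2)"
    by (simp add: sum.distrib sum_subtractf sum_distrib_left right_diff_distrib)
  also have "2 * (U - E 0) / (\<eta> * T) + 2 / (\<eta> * T) * (\<eta> * (\<Sum>t<T. Y t) - \<eta> * (\<Sum>t<T. Z t)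
      + 2 * Lip * \<eta>\<^sup>2 * (\<Sum>t<T. \<beta> t) + T * (Lip * \<eta>\<^sup>2 * \<sigma>2))
    = 2 * (U - E 0) / (\<eta> * T) + 2 * Lip * \<eta> * \<sigma>2
      + 4 * Lip * \<eta> / T * (\<Sum>t<T. \<beta> t) - 2 / T * (\<Sum>t<T. Z t) + 2 / T * (\<Sum>t<T. Y t)"
    using assms(1,2) by (simp add: field_simps power2_eq_square)
  finally show ?thesis .
qed

theorem theoremE3:
  fixes M :: "'m measure"
    and F :: "nat \<Rightarrow> 'm measure"
    and Lf :: "real^'d \<Rightarrow> real"
    and gradL :: "real^'d \<Rightarrow> real^'d"
    and Lip \<eta> \<sigma>2 :: real
    and S :: nat
    and \<theta> g :: "int \<Rightarrow> 'm \<Rightarrow> real^'d"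
    and b \<xi> r :: "nat \<Rightarrow> 'm \<Rightarrow> real^'d"
    and B :: "nat \<Rightarrow> 'm \<Rightarrow> real^'d^'d"
    and \<tau> :: "nat \<Rightarrow> nat"
    and \<epsilon> lam \<rho> \<delta> :: "nat \<Rightarrow> real"
    and T :: nat
  assumes prob: "prob_space M"
    and filt_sub: "\<And>t. subalgebra M (F t)"
    and filt_mono: "\<And>s t. s \<le> t \<Longrightarrow> sets (F s) \<subseteq> sets (F t)"
    and grad: "\<And>x. (Lf has_derivative (\<lambda>h. gradL x \<bullet> h)) (at x)"
    and Lpos: "Lip > 0" and etapos: "\<eta> > 0" and S1: "S \<ge> 1"
    and \<theta>_meas: "\<And>t. t \<ge> - int S \<Longrightarrow> \<theta> t \<in> borel_measurable M"
    and g_meas: "\<And>t. t \<ge> - int S \<Longrightarrow> g t \<in> borel_measurable M"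
    and B_meas: "\<And>t. B t \<in> borel_measurable M"
    and step: "\<And>t. t \<ge> - int S \<Longrightarrow> \<theta> (t + 1) = (\<lambda>\<omega>. \<theta> t \<omega> + \<eta> *\<^sub>R g t \<omega>)"
    and decomp: "\<And>t \<omega>. g (int t) \<omega> = gradL (\<theta> (int t) \<omega>) + b t \<omega> + \<xi> t \<omega>"
    and \<theta>_adapt: "\<And>t. \<theta> (int t) \<in> borel_measurable (F t)"
    and b_adapt: "\<And>t. b t \<in> borel_measurable (F t)"
    \<comment> \<open>(A.1)\<close>
    and A1: "\<And>x y. norm (gradL x - gradL y) \<le> Lip * norm (x - y)"
    \<comment> \<open>(A.2)\<close>
    and sigpos: "\<sigma>2 > 0"
    and A2_mean: "\<And>t i. AE \<omega> in M. real_cond_exp M (F t) (\<lambda>\<omega>. \<xi> t \<omega> $ i) \<omega> = 0"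
    and A2_var: "\<And>t. AE \<omega> in M. real_cond_exp M (F t) (\<lambda>\<omega>. (norm (\<xi> t \<omega>))\<^sup>2) \<omega> \<le> \<sigma>2"
    \<comment> \<open>(A.3)\<close>
    and A3: "bdd_above (range Lf)"
    \<comment> \<open>(A.4)\<close>
    and A4: "\<eta> \<le> 1 / (4 * Lip)"
    \<comment> \<open>(A.5)\<close>
    and A5_range: "\<And>t. 1 \<le> \<tau> t \<and> \<tau> t \<le> S"
    and A5: "\<And>t \<omega>. \<theta> (int t) \<omega> - \<theta> (int t - int (\<tau> t)) \<omega>
                 = (\<Sum>k=1..\<tau> t. \<eta> *\<^sub>R g (int t - int k) \<omega>)"
    \<comment> \<open>(A.6)\<close>
    and A6: "\<And>t \<omega>. b t \<omega> = B t \<omega> *v (\<theta> (int t) \<omega> - \<theta> (int t - int (\<tau> t)) \<omega>) + r t \<omega>"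
    and A6_eps: "\<And>t. (\<integral>\<omega>. norm (r t \<omega>) \<partial>M) \<le> \<epsilon> t"
    \<comment> \<open>(A.7)\<close>
    and A7_nonneg: "\<And>t. lam t \<ge> 0"
    and A7: "\<And>t. (\<integral>\<omega>. g (int t - 1) \<omega> \<bullet> (B t \<omega> *v g (int t - 1) \<omega>) \<partial>M)
                  \<ge> lam t * (\<integral>\<omega>. (norm (g (int t - 1) \<omega>))\<^sup>2 \<partial>M)"
    \<comment> \<open>(A.8)\<close>
    and A8_rho: "\<And>t. 0 \<le> \<rho> t \<and> \<rho> t \<le> 1"
    and A8_delta: "\<And>t. \<delta> t \<ge> 0"
    and A8: "\<And>t. (\<integral>\<omega>. gradL (\<theta> (int t) \<omega>) \<bullet> (B t \<omega> *v g (int t - 1) \<omega>) \<partial>M)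
                  \<ge> \<rho> t * (\<integral>\<omega>. g (int t - 1) \<omega> \<bullet> (B t \<omega> *v g (int t - 1) \<omega>) \<partial>M) - \<delta> t"
    \<comment> \<open>all expectations are finite\<close>
    and int_L: "\<And>t. integrable M (\<lambda>\<omega>. Lf (\<theta> (int t) \<omega>))"
    and int_g: "\<And>t. t \<ge> - int S \<Longrightarrow> integrable M (\<lambda>\<omega>. (norm (g t \<omega>))\<^sup>2)"
    and int_grad: "\<And>t. integrable M (\<lambda>\<omega>. (norm (gradL (\<theta> (int t) \<omega>)))\<^sup>2)"
    and int_b: "\<And>t. integrable M (\<lambda>\<omega>. (norm (b t \<omega>))\<^sup>2)"
    and int_\<xi>: "\<And>t. integrable M (\<lambda>\<omega>. (norm (\<xi> t \<omega>))\<^sup>2)"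
    and int_\<xi>i: "\<And>t i. integrable M (\<lambda>\<omega>. \<xi> t \<omega> $ i)"
    and int_r: "\<And>t. integrable M (\<lambda>\<omega>. norm (r t \<omega>))"
    and int_gr: "\<And>t. integrable M (\<lambda>\<omega>. norm (gradL (\<theta> (int t) \<omega>)) * norm (r t \<omega>))"
    and int_gBg: "\<And>t. integrable M (\<lambda>\<omega>. g (int t - 1) \<omega> \<bullet> (B t \<omega> *v g (int t - 1) \<omega>))"
    and int_cross: "\<And>t k. 1 \<le> k \<Longrightarrow> k \<le> \<tau> t \<Longrightarrow>
        integrable M (\<lambda>\<omega>. gradL (\<theta> (int t) \<omega>) \<bullet> (B t \<omega> *v g (int t - int k) \<omega>))"
    and T1: "T \<ge> 1"
  shows "Min ((\<lambda>t. \<integral>\<omega>. (norm (gradL (\<theta> (int t) \<omega>)))\<^sup>2 \<partial>M) ` {0..<T})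
    \<le> 2 * ((SUP x. Lf x) - (\<integral>\<omega>. Lf (\<theta> 0 \<omega>) \<partial>M)) / (\<eta> * real T)
      + 2 * Lip * \<eta> * \<sigma>2
      + 4 * Lip * \<eta> / real T * (\<Sum>t<T. \<integral>\<omega>. (norm (b t \<omega>))\<^sup>2 \<partial>M)
      - 2 / real T * (\<Sum>t<T. \<eta> * \<rho> t * lam t * (\<integral>\<omega>. (norm (g (int t - 1) \<omega>))\<^sup>2 \<partial>M))
      + 2 / real T * (\<Sum>t<T.
            \<eta> * (\<Sum>k=2..\<tau> t. \<integral>\<omega>. \<bar>gradL (\<theta> (int t) \<omega>) \<bullet> (B t \<omega> *v g (int t - int k) \<omega>)\<bar> \<partial>M)
          + (\<integral>\<omega>. norm (gradL (\<theta> (int t) \<omega>)) * norm (r t \<omega>) \<partial>M)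
          + \<eta> * \<delta> t)"
proof -
  interpret prob_space M by (rule prob)
  have [measurable]: "gradL \<in> borel_measurable borel"
    using borel_measurable_lipschitz[OF A1] Lpos by simp
  have [measurable]: "\<theta> (int t) \<in> borel_measurable M" "g (int t) \<in> borel_measurable M"
    "b t \<in> borel_measurable M" for t
    using \<theta>_meas[of "int t"] g_meas[of "int t"] measurable_from_subalg[OF filt_sub b_adapt] by auto
  have "\<xi> t = (\<lambda>\<omega>. g (int t) \<omega> - gradL (\<theta> (int t) \<omega>) - b t \<omega>)" for t
    using decomp by (auto simp: fun_eq_iff algebra_simps)
  then have \<xi>_meas: "\<xi> t \<in> borel_measurable M" for t
    by simp
  have next_iterate: "\<theta> (int (Suc t)) = (\<lambda>\<omega>. \<theta> (int t) \<omega> + \<eta> *\<^sub>R (gradL (\<theta> (int t) \<omega>) + b t \<omega> + \<xi> t \<omega>))" for t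
    using step[of "int t"] decomp by (simp add: add.commute)
  define EL where "EL t = (\<integral>\<omega>. Lf (\<theta> (int t) \<omega>) \<partial>M)" for t
  define Gb where "Gb t = (\<integral>\<omega>. gradL (\<theta> (int t) \<omega>) \<bullet> b t \<omega> \<partial>M)" for t
  define \<beta> where "\<beta> t = (\<integral>\<omega>. (norm (b t \<omega>))\<^sup>2 \<partial>M)" for t
  define Y where "Y t = \<eta> * (\<Sum>k=2..\<tau> t. \<integral>\<omega>. \<bar>gradL (\<theta> (int t) \<omega>) \<bullet> (B t \<omega> *v g (int t - int k) \<omega>)\<bar> \<partial>M)
      + (\<integral>\<omega>. norm (gradL (\<theta> (int t) \<omega>)) * norm (r t \<omega>) \<partial>M) + \<eta> * \<delta> t" for t
  define Z where "Z t = \<eta> * \<rho> t * lam t * (\<integral>\<omega>. (norm (g (int t - 1) \<omega>))\<^sup>2 \<partial>M)" for t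
  have ascent: "\<eta> / 2 * (\<integral>\<omega>. (norm (gradL (\<theta> (int t) \<omega>)))\<^sup>2 \<partial>M)
      \<le> EL (Suc t) - EL t - \<eta> * Gb t + 2 * Lip * \<eta>\<^sup>2 * \<beta> t + Lip * \<eta>\<^sup>2 * \<sigma>2" for t
    using expected_ascent_step[OF prob filt_sub grad A1 Lpos etapos A4 \<theta>_adapt b_adapt \<xi>_meas
        A2_mean A2_var int_L _ int_grad int_b int_\<xi>] int_L[of "Suc t"]
    unfolding EL_def Gb_def \<beta>_def next_iterate by blast
  have bias: "Z t - Y t \<le> Gb t" for t
  proof -
    have "integrable M (\<lambda>\<omega>. gradL (\<theta> (int t) \<omega>) \<bullet> b t \<omega>)"
      by (rule integrable_inner_of_square_integrable[OF _ _ int_grad int_b]) measurable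
    \<comment> \<open>\<open>of_nat_1\<close> turns \<open>h 1 = g (int t - int 1)\<close> into the form used in (A.7) and (A.8)\<close>
    from integral_inner_bias_lower_bound[where h = "\<lambda>k. g (int t - int k)", simplified of_nat_1,
        OF A6[unfolded A5] conjunct1[OF A5_range] less_imp_le[OF etapos] conjunct1[OF A8_rho]
        this int_gr int_cross A7 A8]
    show ?thesis
      unfolding Y_def Z_def Gb_def by simp
  qed
  have "Min ((\<lambda>t. \<integral>\<omega>. (norm (gradL (\<theta> (int t) \<omega>)))\<^sup>2 \<partial>M) ` {0..<T})
      \<le> 2 * ((SUP x. Lf x) - EL 0) / (\<eta> * T) + 2 * Lip * \<eta> * \<sigma>2
        + 4 * Lip * \<eta> / T * (\<Sum>t<T. \<beta> t) - 2 / T * (\<Sum>t<T. Z t) + 2 / T * (\<Sum>t<T. Y t)"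
  proof (rule Min_le_of_biased_ascent_steps)
    show "\<eta> / 2 * (\<integral>\<omega>. (norm (gradL (\<theta> (int t) \<omega>)))\<^sup>2 \<partial>M)
        \<le> EL (Suc t) - EL t + (\<eta> * (Y t - Z t) + 2 * Lip * \<eta>\<^sup>2 * \<beta> t + Lip * \<eta>\<^sup>2 * \<sigma>2)" for t
      using ascent[of t] mult_left_mono[OF bias[of t], of \<eta>] etapos by (simp add: algebra_simps)
    show "EL T \<le> (SUP x. Lf x)"
      unfolding EL_def using int_L A3 by (rule integral_comp_le_SUP)
  qed (use T1 etapos in auto)
  then show ?thesis
    unfolding EL_def \<beta>_def Y_def Z_def by simp
qed

end
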